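(* Let $X$ be a non-trivial separated locally convex space with topology $\sigma(X,X^* )$, let $T$ be an arbitrary index set and let $f,g,h_t:X\to\overline{\mathbb{R}}$ ($t\in T$) be proper convex functions. Let $A=\{x\in X: h_t(x)\le 0\ \text{for all } t\in T\}$ and consider $$(P)\qquad \inf_{x\in A}\{f(x)-g(x)\},\qquad (\overline{D}_L)\qquad \sup_{\lambda\in\mathbb{R}^{(T)}_+}\ \inf_{(u^*,v^*,\gamma)\in W}\{g^c(u^*,v^*,\gamma)-(f+\lambda h)^c(u^*,v^*,\gamma)\}.$$ If $(P)$ is solvable and has an optimal solution $x_0$ with $\partial_c g(x_0)\neq\emptyset$, then weak duality holds for $(P)$–$(\overline{D}_L)$, i.e. $v(P)\ge v(\overline{D}_L)$.
   Context: $X^*$ is the topological dual of $X$, $\langle x,x^*\rangle$ the pairing, and $W:=X^*\times X^*\times\mathbb{R}$. The coupling function $c:X\times W\to\overline{\mathbb{R}}$ is $c(x,(x^*,y^*,\alpha))=\langle x,x^*\rangle$ if $\langle x,y^*\rangle<\alpha$ and $+\infty$ otherwise. For $\varphi:X\to\overline{\mathbb{R}}$, $\varphi^c(w):=\sup_{x\in X}\{c(x,w)-\varphi(x)\}$ ($w\in W$), with the convention $(+\infty)+(-\infty)=(-\infty)+(+\infty)=(+\infty)-(+\infty)=(-\infty)-(-\infty)=-\infty$ (also used in the dual objective). The c-subdifferential of $g$ at $x_0$ is $\partial_c g(x_0):=\{(x^*,y^*,\alpha)\in W:\ \langle x_0,y^*\rangle<\alpha,\ g(x)-g(x_0)\ge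 c(x,(x^*,y^*,\alpha))-c(x_0,(x^*,y^*,\alpha))\ \text{for all } x\in X\}$. $\mathbb{R}^{(T)}_+$ is the set of families $\lambda=(\lambda_t)_{t\in T}$ with $\lambda_t\ge0$ and only finitely many $\lambda_t\neq0$, and $\lambda h:=\sum_{t:\lambda_t\ne0}\lambda_t h_t$. By convention $f(x)-g(x)=+\infty$ whenever $x\notin\operatorname{dom} f$. $v(\cdot)$ denotes optimal value; $(P)$ is solvable if its infimum is attained. *)

theory Defs
  imports Complex_Main "HOL-Library.Extended_Real"
begin

text \<open>Subtraction on extended reals with the paper's convention
  (+inf)-(+inf) = (-inf)-(-inf) = -inf.\<close>
definition esub :: "ereal \<Rightarrow> ereal \<Rightarrow> ereal" where
  "esub a b = (if (a = \<infinity> \<and> b = \<infinity>) \<or> (a = -\<infinity> \<and> b = -\<infinity>) then -\<infinity> else a - b)"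

text \<open>The dual X* of a non-trivial separated locally convex space carrying sigma(X,X*):
  a linear subspace of the algebraic dual separating points.\<close>
definition separating_dual :: "('a::real_vector \<Rightarrow> real) set \<Rightarrow> bool" where
  "separating_dual D \<longleftrightarrow> (\<forall>l\<in>D. linear l) \<and> (\<lambda>x. 0) \<in> D \<and>
     (\<forall>l\<in>D. \<forall>m\<in>D. (\<lambda>x. l x + m x) \<in> D) \<and>
     (\<forall>l\<in>D. \<forall>r::real. (\<lambda>x. r * l x) \<in> D) \<and>
     (\<forall>x. x \<noteq> 0 \<longrightarrow> (\<exists>l\<in>D. l x \<noteq> 0))"

definition proper_fun :: "('a \<Rightarrow> ereal) \<Rightarrow> bool" where
  "proper_fun f \<longleftrightarrow> (\<forall>x. f x \<noteq> -\<infinity>) \<and> (\<exists>x. f x \<noteq> \<infinity>)"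

definition convex_efun :: "('a::real_vector \<Rightarrow> ereal) \<Rightarrow> bool" where
  "convex_efun f \<longleftrightarrow> (\<forall>x y (r::real) (s::real) (u::real).
     f x \<le> ereal r \<longrightarrow> f y \<le> ereal s \<longrightarrow> 0 \<le> u \<longrightarrow> u \<le> 1 \<longrightarrow>
     f (u *\<^sub>R x + (1 - u) *\<^sub>R y) \<le> ereal (u * r + (1 - u) * s))"

definition coupling :: "'a \<Rightarrow> ('a \<Rightarrow> real) \<times> ('a \<Rightarrow> real) \<times> real \<Rightarrow> ereal" where
  "coupling x w = (case w of (xs, ys, a) \<Rightarrow> if ys x < a then ereal (xs x) else \<infinity>)"

definition Wsp :: "('a \<Rightarrow> real) set \<Rightarrow> (('a \<Rightarrow> real) \<times> ('a \<Rightarrow> real) \<times> real) set" where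
  "Wsp D = D \<times> D \<times> (UNIV :: real set)"

definition cconj :: "('a \<Rightarrow> ereal) \<Rightarrow> ('a \<Rightarrow> real) \<times> ('a \<Rightarrow> real) \<times> real \<Rightarrow> ereal" where
  "cconj \<phi> w = (SUP x. esub (coupling x w) (\<phi> x))"

definition c_subdiff :: "('a \<Rightarrow> real) set \<Rightarrow> ('a \<Rightarrow> ereal) \<Rightarrow> 'a
      \<Rightarrow> (('a \<Rightarrow> real) \<times> ('a \<Rightarrow> real) \<times> real) set" where
  "c_subdiff D g x0 = {(xs, ys, a) \<in> Wsp D. ys x0 < a \<and>
      (\<forall>x. esub (g x) (g x0) \<ge> esub (coupling x (xs, ys, a)) (coupling x0 (xs, ys, a)))}"

definition fin_nonneg :: "'t set \<Rightarrow> ('t \<Rightarrow> real) set" where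
  "fin_nonneg T = {l. (\<forall>t. l t \<ge> 0) \<and> (\<forall>t. t \<notin> T \<longrightarrow> l t = 0) \<and> finite {t. l t \<noteq> 0}}"

definition lam_comb :: "('t \<Rightarrow> real) \<Rightarrow> ('t \<Rightarrow> 'a \<Rightarrow> ereal) \<Rightarrow> 'a \<Rightarrow> ereal" where
  "lam_comb l h x = (\<Sum>t\<in>{t. l t \<noteq> 0}. ereal (l t) * h t x)"

definition feasible :: "'t set \<Rightarrow> ('t \<Rightarrow> 'a \<Rightarrow> ereal) \<Rightarrow> 'a set" where
  "feasible T h = {x. \<forall>t\<in>T. h t x \<le> 0}"

definition dc_obj :: "('a \<Rightarrow> ereal) \<Rightarrow> ('a \<Rightarrow> ereal) \<Rightarrow> 'a \<Rightarrow> ereal" where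
  "dc_obj f g x = (if f x = \<infinity> then \<infinity> else esub (f x) (g x))"

definition val_P :: "'t set \<Rightarrow> ('a \<Rightarrow> ereal) \<Rightarrow> ('a \<Rightarrow> ereal) \<Rightarrow> ('t \<Rightarrow> 'a \<Rightarrow> ereal) \<Rightarrow> ereal" where
  "val_P T f g h = (INF x\<in>feasible T h. dc_obj f g x)"

definition val_DL :: "('a \<Rightarrow> real) set \<Rightarrow> 't set \<Rightarrow> ('a \<Rightarrow> ereal) \<Rightarrow> ('a \<Rightarrow> ereal)
      \<Rightarrow> ('t \<Rightarrow> 'a \<Rightarrow> ereal) \<Rightarrow> ereal" where
  "val_DL D T f g h = (SUP l\<in>fin_nonneg T. INF w\<in>Wsp D.
       esub (cconj g w) (cconj (\<lambda>x. f x + lam_comb l h x) w))"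

end

theory Submission
  imports Defs
begin

text \<open>Pick \<open>w\<close> in the c-subdifferential of \<open>g\<close> at the optimal point \<open>x0\<close>. Then \<open>g x0\<close> is finite and
  the c-Fenchel-Young inequality is an equality, \<open>g\<^sup>c(w) = c(x0,w) - g(x0)\<close>, while for every
  nonnegative finitely supported \<open>\<lambda>\<close> feasibility of \<open>x0\<close> gives \<open>(f + \<lambda>h)(x0) \<le> f(x0)\<close> and hence
  \<open>(f + \<lambda>h)\<^sup>c(w) \<ge> c(x0,w) - f(x0)\<close>. Subtracting, the inner infimum of the dual problem is at most
  \<open>f(x0) - g(x0) = v(P)\<close> for every \<open>\<lambda>\<close>.\<close>

lemma esub_ereal_left [simp]: "esub (ereal r) b = ereal r - b"
  by (simp add: esub_def)

lemma esub_mono: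
  assumes "a \<le> a'" "b' \<le> b"
  shows "esub a b \<le> esub a' b'"
  using assms by (cases a; cases a'; cases b; cases b') (auto simp: esub_def)

lemma coupling_below_level: "ys x < a \<Longrightarrow> coupling x (xs, ys, a) = ereal (xs x)"
  by (simp add: coupling_def)

lemma coupling_neq_MInf: "coupling x w \<noteq> -\<infinity>"
  by (cases w) (simp add: coupling_def)

lemma cconj_upper: "esub (coupling x w) (\<phi> x) \<le> cconj \<phi> w"
  unfolding cconj_def by (rule SUP_upper) simp

lemma c_subdiff_coupling:
  "w \<in> c_subdiff D g x0 \<Longrightarrow> coupling x0 w = ereal (fst w x0)"
  unfolding c_subdiff_def by (auto simp: coupling_below_level)

lemma c_subdiff_finite:
  assumes g: "proper_fun g" and w: "w \<in> c_subdiff D g x0"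
  shows "\<bar>g x0\<bar> \<noteq> \<infinity>"
proof -
  have "esub (g x0) (g x0) \<ge> esub (coupling x0 w) (coupling x0 w)"
    using w unfolding c_subdiff_def by blast
  \<comment> \<open>for \<open>g x0 = \<infinity>\<close> the convention makes the left side \<open>-\<infinity>\<close>, the right side is \<open>0\<close>\<close>
  then have "g x0 \<noteq> \<infinity>"
    using c_subdiff_coupling[OF w] by (auto simp: esub_def)
  then show ?thesis
    using g unfolding proper_fun_def by auto
qed

lemma cconj_c_subdiff:
  assumes g: "proper_fun g" and w: "w \<in> c_subdiff D g x0"
  shows "cconj g w = coupling x0 w - g x0"
proof (rule antisym)
  have subgrad: "\<And>x. esub (g x) (g x0) \<ge> esub (coupling x w) (coupling x0 w)"
    using w unfolding c_subdiff_def by blast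
  obtain G where G: "g x0 = ereal G"
    using c_subdiff_finite[OF g w] by (cases "g x0") auto
  note C = c_subdiff_coupling[OF w]
  show "cconj g w \<le> coupling x0 w - g x0"
    unfolding cconj_def
  proof (rule SUP_least)
    fix x
    have "g x \<noteq> -\<infinity>"
      using g unfolding proper_fun_def by auto
    moreover have "coupling x w \<noteq> -\<infinity>"
      by (rule coupling_neq_MInf)
    ultimately show "esub (coupling x w) (g x) \<le> coupling x0 w - g x0"
      using subgrad[of x] C G
      by (cases "g x"; cases "coupling x w") (auto simp: esub_def)
  qed
  show "coupling x0 w - g x0 \<le> cconj g w"
    using cconj_upper[of x0 w g] C by simp
qed

lemma lam_comb_nonpos:
  assumes "l \<in> fin_nonneg T" "x \<in> feasible T h"
  shows "lam_comb l h x \<le> 0"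
  unfolding lam_comb_def
proof (rule sum_nonpos)
  fix t assume "t \<in> {t. l t \<noteq> 0}"
  then have "t \<in> T" "l t \<ge> 0"
    using assms(1) unfolding fin_nonneg_def by auto
  then have "h t x \<le> 0"
    using assms(2) unfolding feasible_def by auto
  then show "ereal (l t) * h t x \<le> 0"
    using \<open>l t \<ge> 0\<close> by (cases "h t x") (auto simp: mult_nonneg_nonpos)
qed

lemma cconj_Lagrangian_ge:
  assumes "l \<in> fin_nonneg T" "x \<in> feasible T h"
  shows "esub (coupling x w) (f x) \<le> cconj (\<lambda>x. f x + lam_comb l h x) w"
proof -
  have "f x + lam_comb l h x \<le> f x"
    using add_left_mono[OF lam_comb_nonpos[OF assms]] by simp
  then have "esub (coupling x w) (f x) \<le> esub (coupling x w) (f x + lam_comb l h x)"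
    by (rule esub_mono[OF order_refl])
  also have "\<dots> \<le> cconj (\<lambda>x. f x + lam_comb l h x) w"
    by (rule cconj_upper)
  finally show ?thesis .
qed

lemma Lagrangian_dual_le_dc_obj:
  assumes f: "proper_fun f" and g: "proper_fun g"
    and w: "w \<in> c_subdiff D g x0"
    and l: "l \<in> fin_nonneg T" and feas: "x0 \<in> feasible T h"
  shows "esub (cconj g w) (cconj (\<lambda>x. f x + lam_comb l h x) w) \<le> dc_obj f g x0"
proof (cases "f x0 = \<infinity>")
  case True
  then show ?thesis by (simp add: dc_obj_def)
next
  case False
  then obtain F where F: "f x0 = ereal F"
    using f unfolding proper_fun_def by (cases "f x0") auto
  obtain G where G: "g x0 = ereal G"
    using c_subdiff_finite[OF g w] by (cases "g x0") auto
  note C = c_subdiff_coupling[OF w]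
  have "esub (cconj g w) (cconj (\<lambda>x. f x + lam_comb l h x) w)
      \<le> esub (coupling x0 w - g x0) (esub (coupling x0 w) (f x0))"
    using cconj_c_subdiff[OF g w] cconj_Lagrangian_ge[OF l feas]
    by (intro esub_mono) auto
  also have "\<dots> = dc_obj f g x0"
    using C F G by (simp add: dc_obj_def esub_def)
  finally show ?thesis .
qed

theorem corollary4p2:
  fixes D :: "('a::real_vector \<Rightarrow> real) set"
    and T :: "'t set"
    and f g :: "'a \<Rightarrow> ereal"
    and h :: "'t \<Rightarrow> 'a \<Rightarrow> ereal"
    and x0 :: 'a
  assumes nontriv: "\<exists>x::'a. x \<noteq> 0"
    and dual: "separating_dual D"
    and f: "proper_fun f" "convex_efun f"
    and g: "proper_fun g" "convex_efun g"
    and h: "\<forall>t\<in>T. proper_fun (h t) \<and> convex_efun (h t)"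
    and x0_feas: "x0 \<in> feasible T h"
    and x0_opt: "dc_obj f g x0 = val_P T f g h"
    and subdiff: "c_subdiff D g x0 \<noteq> {}"
  shows "val_P T f g h \<ge> val_DL D T f g h"
proof -
  obtain w where w: "w \<in> c_subdiff D g x0"
    using subdiff by blast
  then have "w \<in> Wsp D"
    unfolding c_subdiff_def by blast
  have "val_DL D T f g h \<le> dc_obj f g x0"
    unfolding val_DL_def
  proof (rule SUP_least)
    fix l assume "l \<in> fin_nonneg T"
    then show "(INF w\<in>Wsp D. esub (cconj g w) (cconj (\<lambda>x. f x + lam_comb l h x) w))
        \<le> dc_obj f g x0"
      using \<open>w \<in> Wsp D\<close> Lagrangian_dual_le_dc_obj[OF f(1) g(1) w _ x0_feas]
      by (blast intro: INF_lower2)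
  qed
  with x0_opt show ?thesis by simp
qed

end
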